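(* Let $\mathcal{X}=\mathbb{R}^d$, $\mathcal{X}_n=\{x\in\mathbb{R}^d:|x|\le n\}$, let $Q$ be a probability transition kernel on $\mathbb{R}^d$, and assume there exist a non-increasing sequence $\alpha_n\in(0,1]$ and probability measures $\nu_n$ such that $Q(x,A)\ge\alpha_n\nu_n(A)$ for all Borel $A$, all $x\in\mathcal{X}_n$ and all $n\in\mathbb{N}$. Let $V(x):=g(|x|)$ where $g:\mathbb{R}_+\to\mathbb{R}_+$ is non-decreasing with $g(u)\to\infty$ as $u\to\infty$. Let $X_t$, $t\in\mathbb{N}$, be a Markov chain with kernel $Q$ whose initial state satisfies $\sup_{k\in\mathbb{N}}E[V(X_k)]<\infty$. Then $\mathcal{L}(X_t)$ converges in total variation to some probability $\mu_*$, and for every $n\in\mathbb{N}$ with $g(n)>0$ and every $t\in\mathbb{N}$, $$\|\mathcal{L}(X_t)-\mu_*\|_{TV}\le 4\,\frac{\sup_{k\in\mathbb{N}}E[V(X_k)]}{g(n)}+2(1-\alpha_n)^t.$$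
   Context: $\|\mu\|_{TV}:=\sup_{|\phi|\le 1}|\int\phi\,d\mu|$ over measurable $\phi$; $|\cdot|$ is the Euclidean norm; $\mathcal{L}(Z)$ denotes the law of $Z$. *)

theory Defs
  imports "HOL-Probability.Probability"
begin

definition tv_norm :: "'a measure \<Rightarrow> 'a measure \<Rightarrow> real" where
  "tv_norm \<mu> \<nu> =
     (SUP \<phi> \<in> {\<phi> \<in> borel_measurable \<mu>. \<forall>x\<in>space \<mu>. \<bar>\<phi> x\<bar> \<le> 1}.
        \<bar>(\<integral>x. \<phi> x \<partial>\<mu>) - (\<integral>x. \<phi> x \<partial>\<nu>)\<bar>)"

definition prob_kernel :: "('a::topological_space \<Rightarrow> 'a measure) \<Rightarrow> bool" where
  "prob_kernel Q \<longleftrightarrow> Q \<in> borel \<rightarrow>\<^sub>M prob_algebra borel"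

text \<open>X is a (time-homogeneous) Markov chain with transition kernel Q on the
  probability space M: the X t are Borel random variables and, for every t,
  P(X_0 in A_0, ..., X_t in A_t, X_(t+1) in B)
   = E[1{X_0 in A_0, ..., X_t in A_t} Q(X_t, B)],
  i.e. P(X_(t+1) in B | X_0, ..., X_t) = Q(X_t, B) a.s.\<close>
definition markov_chain :: "'b measure \<Rightarrow> ('a::topological_space \<Rightarrow> 'a measure)
    \<Rightarrow> (nat \<Rightarrow> 'b \<Rightarrow> 'a) \<Rightarrow> bool" where
  "markov_chain M Q X \<longleftrightarrow>
     prob_space M \<and> (\<forall>t. X t \<in> borel_measurable M) \<and>
     (\<forall>t (A :: nat \<Rightarrow> 'a set) B. (\<forall>i\<le>t. A i \<in> sets borel) \<longrightarrow> B \<in> sets borel \<longrightarrow>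
        measure M {\<omega> \<in> space M. (\<forall>i\<le>t. X i \<omega> \<in> A i) \<and> X (Suc t) \<omega> \<in> B}
        = (\<integral>\<omega>. indicator {\<omega> \<in> space M. \<forall>i\<le>t. X i \<omega> \<in> A i} \<omega>
                  * measure (Q (X t \<omega>)) B \<partial>M))"

end

theory Submission
  imports Defs
begin

text \<open>Doeblin's coupling argument with a tail cut-off. Outside the ball of
  radius \<open>n\<close> the minorization is unavailable, but by Markov's inequality every law of
  \<open>X t\<close> gives that region mass at most \<open>S / g n\<close>, where \<open>S\<close> is the uniform moment
  bound. Inside the ball \<open>Q x\<close> dominates \<open>\<alpha> n\<close> times \<open>\<nu> n\<close>, so one step of the chain
  shrinks the total variation distance of two laws by the factor \<open>1 - \<alpha> n\<close>, up to an
  error \<open>4 \<alpha> n S / g n\<close>. Iterating gives a bound \<open>2 (1 - \<alpha> n)^t + 4 S / g n\<close> on the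
  distance between the laws at times \<open>t\<close> and \<open>t + s\<close>, uniformly in \<open>s\<close>; letting \<open>n\<close>
  grow, the laws are Cauchy in total variation. Their setwise limit is countably additive
  because the convergence is uniform over Borel sets, and the bound passes to the limit.\<close>

section \<open>Total variation distance of Borel probability measures\<close>

lemma integrable_bounded_prob_borel:
  fixes f :: "'a::topological_space \<Rightarrow> real"
  assumes "m \<in> space (prob_algebra borel)" "f \<in> borel_measurable borel" "\<And>x. \<bar>f x\<bar> \<le> C"
  shows "integrable m f"
proof -
  interpret prob_space m using assms(1) by (simp add: space_prob_algebra)
  have "sets m = sets borel" using assms(1) by (simp add: space_prob_algebra)
  then have "f \<in> borel_measurable m" using assms(2) measurable_cong_sets[OF _ refl] by blast
  then show ?thesis by (intro integrable_const_bound[where B=C] AE_I2) (use assms(3) in auto)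
qed

lemma abs_integral_le_bound_prob_borel:
  fixes f :: "'a::topological_space \<Rightarrow> real"
  assumes "m \<in> space (prob_algebra borel)" "f \<in> borel_measurable borel" "\<And>x. \<bar>f x\<bar> \<le> C"
  shows "\<bar>integral\<^sup>L m f\<bar> \<le> C"
proof -
  interpret prob_space m using assms(1) by (simp add: space_prob_algebra)
  have f: "integrable m f" using integrable_bounded_prob_borel[OF assms] .
  have "integral\<^sup>L m f \<le> C"
    by (intro integral_le_const[OF f] AE_I2) (metis assms(3) abs_le_D1)
  moreover have "-C \<le> integral\<^sup>L m f"
    by (intro integral_ge_const[OF f] AE_I2) (metis assms(3) abs_le_D2 minus_le_iff)
  ultimately show ?thesis by linarith
qed

lemma abs_integral_diff_le_tv_norm:
  fixes \<phi> :: "'a::topological_space \<Rightarrow> real"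
  assumes m1: "m1 \<in> space (prob_algebra borel)" and m2: "m2 \<in> space (prob_algebra borel)"
    and \<phi>: "\<phi> \<in> borel_measurable borel" "\<And>x. \<bar>\<phi> x\<bar> \<le> 1"
  shows "\<bar>integral\<^sup>L m1 \<phi> - integral\<^sup>L m2 \<phi>\<bar> \<le> tv_norm m1 m2"
proof -
  have sets: "sets m1 = sets borel" "space m1 = UNIV"
    using m1 sets_eq_imp_space_eq[of m1 borel] by (auto simp: space_prob_algebra)
  let ?T = "{\<phi> \<in> borel_measurable m1. \<forall>x\<in>space m1. \<bar>\<phi> x\<bar> \<le> (1::real)}"
  have T: "?T = {\<phi> \<in> borel_measurable borel. \<forall>x. \<bar>\<phi> x\<bar> \<le> 1}"
    using sets measurable_cong_sets[of m1 borel] by auto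
  have "bdd_above ((\<lambda>\<psi>. \<bar>integral\<^sup>L m1 \<psi> - integral\<^sup>L m2 \<psi>\<bar>) ` ?T)"
  proof (rule bdd_aboveI2)
    fix \<psi> assume "\<psi> \<in> ?T"
    then have "\<bar>integral\<^sup>L m1 \<psi>\<bar> \<le> 1" "\<bar>integral\<^sup>L m2 \<psi>\<bar> \<le> 1"
      unfolding T using abs_integral_le_bound_prob_borel m1 m2 by blast+
    then show "\<bar>integral\<^sup>L m1 \<psi> - integral\<^sup>L m2 \<psi>\<bar> \<le> 2" by linarith
  qed
  moreover have "\<phi> \<in> ?T" unfolding T using \<phi> by simp
  ultimately show ?thesis unfolding tv_norm_def by (rule cSUP_upper2) simp
qed

lemma tv_norm_leI:
  fixes m1 m2 :: "'a::topological_space measure"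
  assumes "sets m1 = sets borel"
    and "\<And>\<phi>. \<phi> \<in> borel_measurable borel \<Longrightarrow> (\<And>x. \<bar>\<phi> x\<bar> \<le> 1) \<Longrightarrow>
           \<bar>integral\<^sup>L m1 \<phi> - integral\<^sup>L m2 \<phi>\<bar> \<le> b"
  shows "tv_norm m1 m2 \<le> b"
proof -
  have "space m1 = UNIV" using sets_eq_imp_space_eq[OF assms(1)] by simp
  then have T: "{\<phi> \<in> borel_measurable m1. \<forall>x\<in>space m1. \<bar>\<phi> x\<bar> \<le> (1::real)}
              = {\<phi> \<in> borel_measurable borel. \<forall>x. \<bar>\<phi> x\<bar> \<le> 1}"
    using assms(1) measurable_cong_sets[of m1 borel] by auto
  show ?thesis unfolding tv_norm_def T
  proof (rule cSUP_least)
    show "{\<phi> \<in> borel_measurable borel. \<forall>x. \<bar>\<phi> x\<bar> \<le> (1::real)} \<noteq> {}"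
    proof -
      have "(\<lambda>_. 0) \<in> {\<phi> \<in> borel_measurable borel. \<forall>x. \<bar>\<phi> x\<bar> \<le> (1::real)}" by simp
      then show ?thesis by blast
    qed
  qed (use assms(2) in blast)
qed

lemma tv_norm_nonneg:
  "m1 \<in> space (prob_algebra borel) \<Longrightarrow> m2 \<in> space (prob_algebra borel) \<Longrightarrow>
   0 \<le> tv_norm m1 (m2 :: 'a::topological_space measure)"
  using abs_integral_diff_le_tv_norm[of m1 m2 "\<lambda>_. 0"] by simp

lemma tv_norm_le_2:
  fixes m1 m2 :: "'a::topological_space measure"
  assumes "m1 \<in> space (prob_algebra borel)" "m2 \<in> space (prob_algebra borel)"
  shows "tv_norm m1 m2 \<le> 2"
proof (rule tv_norm_leI)
  show "sets m1 = sets borel" using assms(1) by (simp add: space_prob_algebra)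
  fix \<phi> :: "'a \<Rightarrow> real" assume "\<phi> \<in> borel_measurable borel" "\<And>x. \<bar>\<phi> x\<bar> \<le> 1"
  then have "\<bar>integral\<^sup>L m1 \<phi>\<bar> \<le> 1" "\<bar>integral\<^sup>L m2 \<phi>\<bar> \<le> 1"
    using abs_integral_le_bound_prob_borel assms by blast+
  then show "\<bar>integral\<^sup>L m1 \<phi> - integral\<^sup>L m2 \<phi>\<bar> \<le> 2" by linarith
qed

lemma integral_indicator_prob_borel:
  assumes "m \<in> space (prob_algebra borel)" "A \<in> sets borel"
  shows "integral\<^sup>L m (indicator A) = measure m A"
proof -
  interpret prob_space m using assms(1) by (simp add: space_prob_algebra)
  show ?thesis using assms by (simp add: space_prob_algebra emeasure_eq_measure)
qed

lemma abs_measure_diff_le_tv_norm: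
  fixes A :: "'a::topological_space set"
  assumes "m1 \<in> space (prob_algebra borel)" "m2 \<in> space (prob_algebra borel)" "A \<in> sets borel"
  shows "\<bar>measure m1 A - measure m2 A\<bar> \<le> tv_norm m1 m2"
proof -
  have "indicator A \<in> borel_measurable borel" "\<And>x. \<bar>indicator A x :: real\<bar> \<le> 1"
    using assms(3) by (auto simp: indicator_def)
  from abs_integral_diff_le_tv_norm[OF assms(1,2) this] show ?thesis
    by (simp only: integral_indicator_prob_borel assms)
qed

section \<open>One-step contraction under a local minorization\<close>

lemma integral_mono_of_scaled_measure_le:
  fixes N P :: "'a::topological_space measure" and f :: "'a \<Rightarrow> real"
  assumes N: "N \<in> space (prob_algebra borel)" and P: "P \<in> space (prob_algebra borel)"
    and "0 \<le> \<alpha>" and le: "\<And>A. A \<in> sets borel \<Longrightarrow> \<alpha> * measure N A \<le> measure P A"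
    and f: "f \<in> borel_measurable borel" "\<And>x. 0 \<le> f x" "\<And>x. f x \<le> C"
  shows "\<alpha> * integral\<^sup>L N f \<le> integral\<^sup>L P f"
proof -
  interpret N: prob_space N using N by (simp add: space_prob_algebra)
  interpret P: prob_space P using P by (simp add: space_prob_algebra)
  have sets: "sets N = sets borel" "sets P = sets borel" using N P by (simp_all add: space_prob_algebra)
  have fb: "\<And>x. \<bar>f x\<bar> \<le> C" using f by (metis abs_of_nonneg)
  have scaled_le: "scale_measure (ennreal \<alpha>) N \<le> P"
  proof -
    have "emeasure (scale_measure (ennreal \<alpha>) N) A \<le> emeasure P A" for A
    proof (cases "A \<in> sets borel")
      case True
      have "ennreal \<alpha> * emeasure N A = ennreal (\<alpha> * measure N A)"
        using \<open>0 \<le> \<alpha>\<close> by (simp add: N.emeasure_eq_measure ennreal_mult)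
      also have "\<dots> \<le> emeasure P A" using le[OF True] by (simp add: P.emeasure_eq_measure)
      finally show ?thesis by simp
    qed (simp add: emeasure_notin_sets sets)
    then show ?thesis
      unfolding le_measure_iff using sets sets_eq_imp_space_eq[of N P] by (simp add: le_fun_def space_scale_measure)
  qed
  have "f \<in> borel_measurable N" using f(1) measurable_cong_sets[OF sets(1) refl] by blast
  then have "ennreal \<alpha> * (\<integral>\<^sup>+x. f x \<partial>N) = (\<integral>\<^sup>+x. f x \<partial>scale_measure (ennreal \<alpha>) N)"
    by (intro nn_integral_scale_measure[symmetric]) measurable
  also have "\<dots> \<le> (\<integral>\<^sup>+x. f x \<partial>P)"
    by (rule nn_integral_mono_measure) (use scaled_le sets in auto)
  finally have "ennreal (\<alpha> * integral\<^sup>L N f) \<le> ennreal (integral\<^sup>L P f)"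
    using nn_integral_eq_integral[OF integrable_bounded_prob_borel[OF N f(1) fb]]
      nn_integral_eq_integral[OF integrable_bounded_prob_borel[OF P f(1) fb]] f(2) \<open>0 \<le> \<alpha>\<close>
    by (simp add: ennreal_mult')
  then show ?thesis using f(2) by (simp add: ennreal_le_iff)
qed

lemma abs_integral_diff_minorant_le:
  fixes P \<nu> :: "'a::topological_space measure" and \<phi> :: "'a \<Rightarrow> real"
  assumes P: "P \<in> space (prob_algebra borel)" and \<nu>: "\<nu> \<in> space (prob_algebra borel)"
    and "0 \<le> \<alpha>" and minor: "\<And>A. A \<in> sets borel \<Longrightarrow> \<alpha> * measure \<nu> A \<le> measure P A"
    and \<phi>: "\<phi> \<in> borel_measurable borel" "\<And>x. \<bar>\<phi> x\<bar> \<le> 1"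
  shows "\<bar>integral\<^sup>L P \<phi> - \<alpha> * integral\<^sup>L \<nu> \<phi>\<bar> \<le> 1 - \<alpha>"
proof -
  have shift: "integral\<^sup>L m (\<lambda>x. 1 + \<phi> x) = 1 + integral\<^sup>L m \<phi>"
    "integral\<^sup>L m (\<lambda>x. 1 - \<phi> x) = 1 - integral\<^sup>L m \<phi>"
    if m: "m \<in> space (prob_algebra borel)" for m
  proof -
    interpret prob_space m using m by (simp add: space_prob_algebra)
    have "integrable m \<phi>" using integrable_bounded_prob_borel[OF m \<phi>] .
    then show "integral\<^sup>L m (\<lambda>x. 1 + \<phi> x) = 1 + integral\<^sup>L m \<phi>"
      "integral\<^sup>L m (\<lambda>x. 1 - \<phi> x) = 1 - integral\<^sup>L m \<phi>" by (simp_all add: prob_space)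
  qed
  have \<phi>_bounds: "0 \<le> 1 + \<phi> x" "1 + \<phi> x \<le> 2" "0 \<le> 1 - \<phi> x" "1 - \<phi> x \<le> 2" for x
    using \<phi>(2)[of x] by linarith+
  have "\<alpha> * integral\<^sup>L \<nu> (\<lambda>x. 1 + \<phi> x) \<le> integral\<^sup>L P (\<lambda>x. 1 + \<phi> x)"
    by (rule integral_mono_of_scaled_measure_le[OF \<nu> P \<open>0 \<le> \<alpha>\<close> minor, where C=2])
       (use \<phi>(1) \<phi>_bounds in auto)
  moreover have "\<alpha> * integral\<^sup>L \<nu> (\<lambda>x. 1 - \<phi> x) \<le> integral\<^sup>L P (\<lambda>x. 1 - \<phi> x)"
    by (rule integral_mono_of_scaled_measure_le[OF \<nu> P \<open>0 \<le> \<alpha>\<close> minor, where C=2])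
       (use \<phi>(1) \<phi>_bounds in auto)
  ultimately show ?thesis unfolding shift[OF P] shift[OF \<nu>] by (simp add: algebra_simps)
qed

lemma abs_integral_le_of_abs_le_indicator:
  fixes u :: "'a::topological_space \<Rightarrow> real"
  assumes m: "m \<in> space (prob_algebra borel)" and S: "S \<in> sets borel"
    and u: "u \<in> borel_measurable borel" "\<And>x. \<bar>u x\<bar> \<le> C * indicator S x"
  shows "\<bar>integral\<^sup>L m u\<bar> \<le> C * measure m S"
proof -
  interpret prob_space m using m by (simp add: space_prob_algebra)
  have S_m: "S \<in> sets m" using m S by (simp add: space_prob_algebra)
  have "\<bar>u x\<bar> \<le> \<bar>C\<bar>" for x using u(2)[of x] by (cases "x \<in> S") auto
  then have "integrable m u" by (rule integrable_bounded_prob_borel[OF m u(1)])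
  moreover have "integrable m (\<lambda>x. C * indicator S x)"
    using S_m by (simp add: emeasure_eq_measure)
  ultimately have "integral\<^sup>L m (\<lambda>x. \<bar>u x\<bar>) \<le> integral\<^sup>L m (\<lambda>x. C * indicator S x)"
    by (intro integral_mono integrable_abs u(2))
  then show ?thesis
    using S_m integral_abs_bound[of m u] by (simp add: emeasure_eq_measure del: integral_abs_bound)
qed

lemma abs_integral_diff_le_of_near_const:
  fixes h :: "'a::topological_space \<Rightarrow> real"
  assumes m1: "m1 \<in> space (prob_algebra borel)" and m2: "m2 \<in> space (prob_algebra borel)"
    and \<alpha>: "0 \<le> \<alpha>" "\<alpha> \<le> 1" and B: "B \<in> sets borel"
    and tail1: "measure m1 (-B) \<le> c" and tail2: "measure m2 (-B) \<le> c"
    and h: "h \<in> borel_measurable borel" "\<And>x. \<bar>h x\<bar> \<le> 1" and "\<bar>a\<bar> \<le> 1"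
    and near: "\<And>x. x \<in> B \<Longrightarrow> \<bar>h x - \<alpha> * a\<bar> \<le> 1 - \<alpha>"
  shows "\<bar>integral\<^sup>L m1 h - integral\<^sup>L m2 h\<bar> \<le> (1 - \<alpha>) * tv_norm m1 m2 + 4 * \<alpha> * c"
proof -
  \<comment> \<open>In \<open>h = (1 - \<alpha>) k + \<alpha> a + \<alpha> u\<close> the constant cancels in the difference, \<open>k\<close> is a
    test function and \<open>u\<close> lives off \<open>B\<close>. For \<open>\<alpha> = 1\<close> the division yields \<open>k = 0\<close> on \<open>B\<close>,
    where then \<open>h = a\<close>.\<close>
  define k where "k x = (if x \<in> B then (h x - \<alpha> * a) / (1 - \<alpha>) else h x)" for x
  define u where "u x = indicator (-B) x * (h x - a)" for x
  have k_meas: "k \<in> borel_measurable borel" unfolding k_def using h(1) B by measurable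
  have u_meas: "u \<in> borel_measurable borel" unfolding u_def using h(1) B by measurable
  have k_bound: "\<bar>k x\<bar> \<le> 1" for x
    using near[of x] h(2)[of x] \<alpha> by (auto simp: k_def abs_divide divide_le_eq_1)
  have u_bound: "\<bar>u x\<bar> \<le> 2 * indicator (-B) x" for x
    using h(2)[of x] \<open>\<bar>a\<bar> \<le> 1\<close> by (auto simp: u_def indicator_def)
  have u_bound2: "\<bar>u x\<bar> \<le> 2" for x
    using u_bound[of x] by (cases "x \<in> B") auto
  have decomp: "h x = (1 - \<alpha>) * k x + \<alpha> * a + \<alpha> * u x" for x
  proof (cases "x \<in> B")
    case True
    show ?thesis
    proof (cases "\<alpha> = 1")
      case False
      then show ?thesis using \<open>x \<in> B\<close> by (simp add: k_def u_def field_simps)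
    qed (use near[OF True] True in \<open>simp add: k_def u_def\<close>)
  qed (simp add: k_def u_def algebra_simps)
  have integral_decomp: "integral\<^sup>L m h = (1 - \<alpha>) * integral\<^sup>L m k + \<alpha> * a + \<alpha> * integral\<^sup>L m u"
    if m: "m \<in> space (prob_algebra borel)" for m
  proof -
    interpret prob_space m using m by (simp add: space_prob_algebra)
    have "integrable m k" "integrable m u"
      using integrable_bounded_prob_borel[OF m] k_meas k_bound u_meas u_bound2 by blast+
    then show ?thesis unfolding decomp[abs_def] by (simp add: prob_space)
  qed
  let ?K = "integral\<^sup>L m1 k - integral\<^sup>L m2 k" and ?U = "integral\<^sup>L m1 u - integral\<^sup>L m2 u"
  have "\<bar>integral\<^sup>L m1 u\<bar> \<le> 2 * c" "\<bar>integral\<^sup>L m2 u\<bar> \<le> 2 * c"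
    using abs_integral_le_of_abs_le_indicator[OF m1 _ u_meas u_bound]
      abs_integral_le_of_abs_le_indicator[OF m2 _ u_meas u_bound] B tail1 tail2 by force+
  then have U: "\<bar>?U\<bar> \<le> 4 * c" by linarith
  have K: "\<bar>?K\<bar> \<le> tv_norm m1 m2"
    by (rule abs_integral_diff_le_tv_norm[OF m1 m2 k_meas k_bound])
  have "integral\<^sup>L m1 h - integral\<^sup>L m2 h = (1 - \<alpha>) * ?K + \<alpha> * ?U"
    unfolding integral_decomp[OF m1] integral_decomp[OF m2] by (simp add: algebra_simps)
  also have "\<bar>\<dots>\<bar> \<le> (1 - \<alpha>) * \<bar>?K\<bar> + \<alpha> * \<bar>?U\<bar>"
    using abs_triangle_ineq[of "(1 - \<alpha>) * ?K" "\<alpha> * ?U"] \<alpha> by (simp add: abs_mult)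
  also have "\<dots> \<le> (1 - \<alpha>) * tv_norm m1 m2 + \<alpha> * (4 * c)"
    using \<alpha> K U by (intro add_mono mult_left_mono) auto
  finally show ?thesis by simp
qed

lemma bind_in_prob_algebra_borel:
  "m \<in> space (prob_algebra borel) \<Longrightarrow> Q \<in> borel \<rightarrow>\<^sub>M prob_algebra borel \<Longrightarrow>
   m \<bind> Q \<in> space (prob_algebra (borel :: 'a::topological_space measure))"
  by (simp add: space_prob_algebra sets_bind' prob_space_bind')

lemma integral_bind_prob_kernel:
  fixes \<phi> :: "'a::topological_space \<Rightarrow> real"
  assumes K: "Q \<in> borel \<rightarrow>\<^sub>M prob_algebra borel" and m: "m \<in> space (prob_algebra borel)"
    and \<phi>: "\<phi> \<in> borel_measurable borel" "\<And>x. \<bar>\<phi> x\<bar> \<le> 1"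
  shows "integral\<^sup>L (m \<bind> Q) \<phi> = (\<integral>x. integral\<^sup>L (Q x) \<phi> \<partial>m)"
proof -
  interpret prob_space m using m by (simp add: space_prob_algebra)
  have "sets m = sets borel" using m by (simp add: space_prob_algebra)
  then have "Q \<in> m \<rightarrow>\<^sub>M subprob_algebra borel"
    using measurable_prob_algebraD[OF K] measurable_cong_sets[OF _ refl] by blast
  moreover have "emeasure (Q x) (space (Q x)) \<le> ennreal 1" for x
    using measurable_space[OF K, of x] by (simp add: space_prob_algebra prob_space.emeasure_space_1)
  ultimately show ?thesis
    by (intro integral_bind[OF \<phi>(1) \<phi>(2), where B'=1]) (auto intro: finite_measure)
qed

lemma tv_norm_bind_le:
  fixes Q :: "'a::topological_space \<Rightarrow> 'a measure"
  assumes K: "Q \<in> borel \<rightarrow>\<^sub>M prob_algebra borel"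
    and m1: "m1 \<in> space (prob_algebra borel)" and m2: "m2 \<in> space (prob_algebra borel)"
    and \<alpha>: "0 \<le> \<alpha>" "\<alpha> \<le> 1" and \<nu>: "\<nu> \<in> space (prob_algebra borel)" and B: "B \<in> sets borel"
    and minor: "\<And>x A. x \<in> B \<Longrightarrow> A \<in> sets borel \<Longrightarrow> \<alpha> * measure \<nu> A \<le> measure (Q x) A"
    and tail1: "measure m1 (-B) \<le> c" and tail2: "measure m2 (-B) \<le> c"
  shows "tv_norm (m1 \<bind> Q) (m2 \<bind> Q) \<le> (1 - \<alpha>) * tv_norm m1 m2 + 4 * \<alpha> * c"
proof (rule tv_norm_leI)
  show "sets (m1 \<bind> Q) = sets borel" using bind_in_prob_algebra_borel[OF m1 K] by (simp add: space_prob_algebra)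
  fix \<phi> :: "'a \<Rightarrow> real" assume \<phi>: "\<phi> \<in> borel_measurable borel" "\<And>x. \<bar>\<phi> x\<bar> \<le> 1"
  define h where "h x = integral\<^sup>L (Q x) \<phi>" for x
  have Qx: "Q x \<in> space (prob_algebra borel)" for x using measurable_space[OF K] by simp
  have "h \<in> borel_measurable borel" unfolding h_def
    using measurable_compose[OF measurable_prob_algebraD[OF K] integral_measurable_subprob_algebra[OF \<phi>(1)]]
    by simp
  moreover have "\<bar>h x\<bar> \<le> 1" for x unfolding h_def by (rule abs_integral_le_bound_prob_borel[OF Qx \<phi>])
  moreover have "\<bar>integral\<^sup>L \<nu> \<phi>\<bar> \<le> 1" by (rule abs_integral_le_bound_prob_borel[OF \<nu> \<phi>])
  moreover have "\<bar>h x - \<alpha> * integral\<^sup>L \<nu> \<phi>\<bar> \<le> 1 - \<alpha>" if "x \<in> B" for x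
    unfolding h_def by (rule abs_integral_diff_minorant_le[OF Qx \<nu> \<alpha>(1) minor[OF that] \<phi>])
  ultimately have "\<bar>integral\<^sup>L m1 h - integral\<^sup>L m2 h\<bar> \<le> (1 - \<alpha>) * tv_norm m1 m2 + 4 * \<alpha> * c"
    by (rule abs_integral_diff_le_of_near_const[OF m1 m2 \<alpha> B tail1 tail2])
  then show "\<bar>integral\<^sup>L (m1 \<bind> Q) \<phi> - integral\<^sup>L (m2 \<bind> Q) \<phi>\<bar> \<le> (1 - \<alpha>) * tv_norm m1 m2 + 4 * \<alpha> * c"
    unfolding h_def integral_bind_prob_kernel[OF K m1 \<phi>] integral_bind_prob_kernel[OF K m2 \<phi>] .
qed

lemma tv_norm_iterate_bind_le:
  fixes Q :: "'a::topological_space \<Rightarrow> 'a measure" and \<mu> :: "nat \<Rightarrow> 'a measure"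
  assumes K: "Q \<in> borel \<rightarrow>\<^sub>M prob_algebra borel"
    and \<mu>: "\<And>t. \<mu> t \<in> space (prob_algebra borel)" and step: "\<And>t. \<mu> (Suc t) = \<mu> t \<bind> Q"
    and \<alpha>: "0 \<le> \<alpha>" "\<alpha> \<le> 1" and \<nu>: "\<nu> \<in> space (prob_algebra borel)" and B: "B \<in> sets borel"
    and minor: "\<And>x A. x \<in> B \<Longrightarrow> A \<in> sets borel \<Longrightarrow> \<alpha> * measure \<nu> A \<le> measure (Q x) A"
    and tail: "\<And>t. measure (\<mu> t) (-B) \<le> c"
  shows "tv_norm (\<mu> t) (\<mu> (t + s)) \<le> 2 * (1 - \<alpha>) ^ t + 4 * c"
proof (induction t arbitrary: s)
  case 0
  have "0 \<le> c" using tail[of 0] measure_nonneg order_trans by blast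
  then show ?case using tv_norm_le_2[OF \<mu> \<mu>, of 0 s] by simp
next
  case (Suc t)
  have "tv_norm (\<mu> (Suc t)) (\<mu> (Suc t + s)) \<le> (1 - \<alpha>) * tv_norm (\<mu> t) (\<mu> (t + s)) + 4 * \<alpha> * c"
    unfolding add_Suc step by (rule tv_norm_bind_le[OF K \<mu> \<mu> \<alpha> \<nu> B minor tail tail])
  also have "\<dots> \<le> (1 - \<alpha>) * (2 * (1 - \<alpha>) ^ t + 4 * c) + 4 * \<alpha> * c"
    using Suc.IH[of s] \<alpha> by (intro add_mono mult_left_mono) auto
  also have "\<dots> = 2 * (1 - \<alpha>) ^ Suc t + 4 * c" by (simp add: algebra_simps)
  finally show ?case .
qed

section \<open>Laws of a Markov chain\<close>

lemma markov_chain_transition: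
  assumes "markov_chain M Q X" "\<And>i. i \<le> t \<Longrightarrow> A i \<in> sets borel" "B \<in> sets borel"
  shows "measure M {\<omega> \<in> space M. (\<forall>i\<le>t. X i \<omega> \<in> A i) \<and> X (Suc t) \<omega> \<in> B}
    = (\<integral>\<omega>. indicator {\<omega> \<in> space M. \<forall>i\<le>t. X i \<omega> \<in> A i} \<omega> * measure (Q (X t \<omega>)) B \<partial>M)"
  using assms unfolding markov_chain_def by blast

lemma markov_chain_distr_in_prob_algebra:
  "markov_chain M Q X \<Longrightarrow> distr M borel (X t) \<in> space (prob_algebra borel)"
  unfolding markov_chain_def by (auto simp: space_prob_algebra intro: prob_space.prob_space_distr)

lemma markov_chain_distr_Suc:
  fixes Q :: "'a::topological_space \<Rightarrow> 'a measure" and X :: "nat \<Rightarrow> 'b \<Rightarrow> 'a"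
  assumes K: "Q \<in> borel \<rightarrow>\<^sub>M prob_algebra borel" and chain: "markov_chain M Q X"
  shows "distr M borel (X (Suc t)) = distr M borel (X t) \<bind> Q"
proof -
  interpret prob_space M using chain by (simp add: markov_chain_def)
  have X: "X t \<in> borel_measurable M" "X (Suc t) \<in> borel_measurable M"
    using chain by (simp_all add: markov_chain_def)
  have K': "Q \<in> distr M borel (X t) \<rightarrow>\<^sub>M subprob_algebra borel"
    using measurable_prob_algebraD[OF K] by simp
  have Qx: "prob_space (Q x)" "sets (Q x) = sets borel" for x
    using measurable_space[OF K, of x] by (simp_all add: space_prob_algebra)
  show ?thesis
  proof (rule measure_eqI)
    show "sets (distr M borel (X (Suc t))) = sets (distr M borel (X t) \<bind> Q)"
      by (simp add: Qx)
  next
    fix A assume "A \<in> sets (distr M borel (X (Suc t)))"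
    then have A: "A \<in> sets borel" by simp
    have QA: "(\<lambda>\<omega>. measure (Q (X t \<omega>)) A) \<in> borel_measurable M"
      using measurable_compose[OF X(1) measurable_compose[OF K measurable_measure_prob_algebra[OF A]]] .
    have "measure M {\<omega> \<in> space M. (\<forall>i\<le>t. X i \<omega> \<in> UNIV) \<and> X (Suc t) \<omega> \<in> A}
        = (\<integral>\<omega>. indicator {\<omega> \<in> space M. \<forall>i\<le>t. X i \<omega> \<in> UNIV} \<omega> * measure (Q (X t \<omega>)) A \<partial>M)"
      using markov_chain_transition[OF chain, of t "\<lambda>_. UNIV" A] A by simp
    also have "\<dots> = (\<integral>\<omega>. measure (Q (X t \<omega>)) A \<partial>M)"
      by (rule Bochner_Integration.integral_cong) simp_all
    finally have "emeasure M (X (Suc t) -` A \<inter> space M) = ennreal (\<integral>\<omega>. measure (Q (X t \<omega>)) A \<partial>M)"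
      by (simp add: emeasure_eq_measure vimage_def Int_def conj_commute)
    also have "\<dots> = (\<integral>\<^sup>+\<omega>. emeasure (Q (X t \<omega>)) A \<partial>M)"
      using QA by (subst nn_integral_eq_integral[symmetric])
        (auto intro!: integrable_const_bound[where B=1] nn_integral_cong
          simp: prob_space.prob_le_1[OF Qx(1)] finite_measure.emeasure_eq_measure[OF prob_space.finite_measure[OF Qx(1)]])
    also have "\<dots> = (\<integral>\<^sup>+x. emeasure (Q x) A \<partial>distr M borel (X t))"
      by (rule nn_integral_distr[symmetric, OF X(1)])
        (use measurable_compose[OF measurable_prob_algebraD[OF K] measurable_emeasure_subprob_algebra[OF A]] in simp)
    finally show "emeasure (distr M borel (X (Suc t))) A = emeasure (distr M borel (X t) \<bind> Q) A"
      using A X by (simp add: emeasure_distr emeasure_bind[OF _ K'])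
  qed
qed

lemma measure_distr_outside_cball_le:
  fixes Y :: "'b \<Rightarrow> 'a::real_normed_vector" and g :: "real \<Rightarrow> real"
  assumes "prob_space M" and Y: "Y \<in> borel_measurable M"
    and g_mono: "mono_on {0..} g" and "0 \<le> r" and "0 < g r"
    and "0 \<le> C" and moment: "(\<integral>\<^sup>+\<omega>. ennreal (g (norm (Y \<omega>))) \<partial>M) \<le> ennreal C"
  shows "measure (distr M borel Y) (- cball 0 r) \<le> C / g r"
proof -
  interpret prob_space M by fact
  have outside: "- cball (0::'a) r \<in> sets borel" by (simp add: borel_open open_Compl)
  define E where "E = Y -` (- cball 0 r) \<inter> space M"
  have E: "E \<in> sets M" unfolding E_def by (rule measurable_sets[OF Y outside])
  have "ennreal (g r * measure M E) = ennreal (g r) * emeasure M E"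
    using \<open>0 < g r\<close> by (simp add: emeasure_eq_measure ennreal_mult)
  also have "\<dots> = (\<integral>\<^sup>+\<omega>. ennreal (g r) * indicator E \<omega> \<partial>M)"
    by (rule nn_integral_cmult_indicator[symmetric, OF E])
  also have "\<dots> \<le> (\<integral>\<^sup>+\<omega>. ennreal (g (norm (Y \<omega>))) \<partial>M)"
  proof (rule nn_integral_mono)
    fix \<omega>
    have "g r \<le> g (norm (Y \<omega>))" if "\<omega> \<in> E"
      using that \<open>0 \<le> r\<close> by (intro mono_onD[OF g_mono]) (auto simp: E_def mem_cball_0)
    then show "ennreal (g r) * indicator E \<omega> \<le> ennreal (g (norm (Y \<omega>)))"
      by (cases "\<omega> \<in> E") (simp_all add: ennreal_leI)
  qed
  also note moment
  finally have "g r * measure M E \<le> C" using \<open>0 \<le> C\<close> by (simp add: ennreal_le_iff)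
  then show ?thesis
    using \<open>0 < g r\<close> measure_distr[OF Y outside] by (simp add: E_def le_divide_eq mult.commute)
qed

lemma markov_chain_tv_norm_shift_le:
  fixes Q :: "'a::real_normed_vector \<Rightarrow> 'a measure" and X :: "nat \<Rightarrow> 'b \<Rightarrow> 'a"
    and g :: "real \<Rightarrow> real"
  assumes K: "Q \<in> borel \<rightarrow>\<^sub>M prob_algebra borel" and chain: "markov_chain M Q X"
    and \<alpha>: "0 \<le> \<alpha>" "\<alpha> \<le> 1" and \<nu>: "\<nu> \<in> space (prob_algebra borel)"
    and minor: "\<And>x A. norm x \<le> r \<Longrightarrow> A \<in> sets borel \<Longrightarrow> \<alpha> * measure \<nu> A \<le> measure (Q x) A"
    and g_mono: "mono_on {0..} g" and "0 \<le> r" and "0 < g r"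
    and "0 \<le> S" and moment: "\<And>t. (\<integral>\<^sup>+\<omega>. ennreal (g (norm (X t \<omega>))) \<partial>M) \<le> ennreal S"
  shows "tv_norm (distr M borel (X t)) (distr M borel (X (t + s))) \<le> 2 * (1 - \<alpha>) ^ t + 4 * (S / g r)"
proof -
  have M: "prob_space M" and X: "\<And>t. X t \<in> borel_measurable M"
    using chain unfolding markov_chain_def by auto
  show ?thesis
  proof (rule tv_norm_iterate_bind_le[OF K _ _ \<alpha> \<nu>])
    show "distr M borel (X t) \<in> space (prob_algebra borel)" for t
      by (rule markov_chain_distr_in_prob_algebra[OF chain])
    show "distr M borel (X (Suc t)) = distr M borel (X t) \<bind> Q" for t
      by (rule markov_chain_distr_Suc[OF K chain])
    show "measure (distr M borel (X t)) (- cball 0 r) \<le> S / g r" for t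
      by (rule measure_distr_outside_cball_le[OF M X g_mono]) (use assms in auto)
  qed (use minor in \<open>auto simp: mem_cball_0\<close>)
qed

section \<open>Limits of Cauchy sequences in total variation\<close>

lemma (in prob_space) abs_integral_diff_le:
  fixes f g :: "'a \<Rightarrow> real"
  assumes "integrable M f" "integrable M g" "\<And>x. x \<in> space M \<Longrightarrow> \<bar>f x - g x\<bar> \<le> e"
  shows "\<bar>integral\<^sup>L M f - integral\<^sup>L M g\<bar> \<le> e"
proof -
  have "\<bar>integral\<^sup>L M (\<lambda>x. f x - g x)\<bar> \<le> integral\<^sup>L M (\<lambda>x. \<bar>f x - g x\<bar>)"
    by (rule integral_abs_bound)
  also have "\<dots> \<le> e" using assms by (intro integral_le_const AE_I2) auto
  finally show ?thesis using assms(1,2) by simp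
qed

lemma integral_floor_approx:
  fixes \<phi> :: "'a::topological_space \<Rightarrow> real"
  assumes m: "m \<in> space (prob_algebra borel)" and \<phi>: "\<phi> \<in> borel_measurable borel" "\<And>x. \<bar>\<phi> x\<bar> \<le> 1"
  shows "(\<integral>x. \<lfloor>real k * \<phi> x\<rfloor> / real k \<partial>m)
       = (\<Sum>j\<in>{-int k..int k}. j / real k * measure m {x. \<lfloor>real k * \<phi> x\<rfloor> = j})"
proof -
  interpret prob_space m using m by (simp add: space_prob_algebra)
  define E where "E j = {x. \<lfloor>real k * \<phi> x\<rfloor> = j}" for j
  have E: "E j \<in> sets m" for j using m \<phi>(1) by (simp add: space_prob_algebra E_def)
  have range: "\<lfloor>real k * \<phi> x\<rfloor> \<in> {-int k..int k}" for x
  proof -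
    have "\<bar>real k * \<phi> x\<bar> \<le> real k" using \<phi>(2)[of x] by (simp add: abs_mult mult_left_le)
    then show ?thesis by (simp add: abs_le_iff le_floor_iff floor_le_iff)
  qed
  have "\<lfloor>real k * \<phi> x\<rfloor> / real k = (\<Sum>j\<in>{-int k..int k}. j / real k * indicator (E j) x)" for x
  proof -
    have "(\<Sum>j\<in>{-int k..int k}. j / real k * indicator (E j) x)
        = (\<Sum>j\<in>{-int k..int k}. if \<lfloor>real k * \<phi> x\<rfloor> = j then j / real k else 0)"
      by (rule sum.cong) (auto simp: E_def indicator_def)
    then show ?thesis using range[of x] by (simp add: sum.delta)
  qed
  then have "(\<integral>x. \<lfloor>real k * \<phi> x\<rfloor> / real k \<partial>m)
      = (\<Sum>j\<in>{-int k..int k}. \<integral>x. j / real k * indicator (E j) x \<partial>m)"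
    using E by (simp add: emeasure_eq_measure Bochner_Integration.integral_sum)
  also have "\<dots> = (\<Sum>j\<in>{-int k..int k}. j / real k * measure m (E j))"
    using E by (simp add: emeasure_eq_measure)
  finally show ?thesis unfolding E_def .
qed

lemma tendsto_integral_of_tendsto_measure:
  fixes \<mu> :: "nat \<Rightarrow> 'a::topological_space measure" and \<phi> :: "'a \<Rightarrow> real"
  assumes \<mu>: "\<And>s. \<mu> s \<in> space (prob_algebra borel)" and m: "m \<in> space (prob_algebra borel)"
    and setwise: "\<And>A. A \<in> sets borel \<Longrightarrow> (\<lambda>s. measure (\<mu> s) A) \<longlonglongrightarrow> measure m A"
    and \<phi>: "\<phi> \<in> borel_measurable borel" "\<And>x. \<bar>\<phi> x\<bar> \<le> 1"
  shows "(\<lambda>s. integral\<^sup>L (\<mu> s) \<phi>) \<longlonglongrightarrow> integral\<^sup>L m \<phi>"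
proof (rule LIMSEQ_I)
  fix r :: real assume "0 < r"
  obtain k :: nat where k: "3 / r < real k" using reals_Archimedean2 by blast
  moreover have "0 < 3 / r" using \<open>0 < r\<close> by simp
  ultimately have "0 < real k" by linarith
  then have "0 < k" by simp
  have "1 / real k < r / 3" using k \<open>0 < r\<close> \<open>0 < k\<close> by (simp add: field_simps)
  define \<psi> where "\<psi> x = \<lfloor>real k * \<phi> x\<rfloor> / real k" for x
  have \<psi>_meas: "\<psi> \<in> borel_measurable borel" unfolding \<psi>_def using \<phi>(1) by measurable
  have close: "\<bar>\<phi> x - \<psi> x\<bar> \<le> 1 / real k" for x
  proof -
    have "\<phi> x - \<psi> x = (real k * \<phi> x - \<lfloor>real k * \<phi> x\<rfloor>) / real k"
      using \<open>0 < k\<close> by (simp add: \<psi>_def field_simps)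
    moreover have "0 \<le> real k * \<phi> x - \<lfloor>real k * \<phi> x\<rfloor>" "real k * \<phi> x - \<lfloor>real k * \<phi> x\<rfloor> \<le> 1"
      by linarith+
    ultimately show ?thesis by (simp add: divide_right_mono)
  qed
  have "1 / real k \<le> 1" using \<open>0 < k\<close> by simp
  then have \<psi>_bound: "\<bar>\<psi> x\<bar> \<le> 2" for x using close[of x] \<phi>(2)[of x] by linarith
  have approx: "\<bar>integral\<^sup>L n \<phi> - integral\<^sup>L n \<psi>\<bar> \<le> 1 / real k" if n: "n \<in> space (prob_algebra borel)" for n
    using n close integrable_bounded_prob_borel[OF n \<phi>] integrable_bounded_prob_borel[OF n \<psi>_meas \<psi>_bound]
    by (intro prob_space.abs_integral_diff_le) (simp_all add: space_prob_algebra)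
  have "(\<lambda>s. integral\<^sup>L (\<mu> s) \<psi>) \<longlonglongrightarrow> integral\<^sup>L m \<psi>"
    unfolding \<psi>_def integral_floor_approx[OF \<mu> \<phi>] integral_floor_approx[OF m \<phi>]
    using \<phi>(1) by (intro tendsto_sum tendsto_mult_left setwise) measurable
  then obtain N where N: "\<And>s. s \<ge> N \<Longrightarrow> \<bar>integral\<^sup>L (\<mu> s) \<psi> - integral\<^sup>L m \<psi>\<bar> < r / 3"
    using \<open>0 < r\<close> by (metis LIMSEQ_D divide_pos_pos real_norm_def zero_less_numeral)
  have "\<bar>integral\<^sup>L (\<mu> s) \<phi> - integral\<^sup>L m \<phi>\<bar> < r" if "s \<ge> N" for s
    using N[OF that] approx[OF \<mu>, of s] approx[OF m] \<open>1 / real k < r / 3\<close> by linarith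
  then show "\<exists>N. \<forall>s\<ge>N. norm (integral\<^sup>L (\<mu> s) \<phi> - integral\<^sup>L m \<phi>) < r" by auto
qed

lemma convergent_of_uniform_tail_bound:
  fixes x :: "nat \<Rightarrow> real"
  assumes "\<And>\<epsilon>. 0 < \<epsilon> \<Longrightarrow> \<exists>T. \<forall>t\<ge>T. \<forall>s. \<bar>x t - x (t + s)\<bar> \<le> \<epsilon>"
  shows "convergent x"
proof (rule Cauchy_convergent, rule CauchyI)
  fix e :: real assume "0 < e"
  then obtain T where T: "\<And>t s. t \<ge> T \<Longrightarrow> \<bar>x t - x (t + s)\<bar> \<le> e / 2"
    using assms[of "e / 2"] by auto
  have "\<bar>x m - x n\<bar> \<le> e / 2" if "m \<ge> T" "n \<ge> T" for m n
    using T[OF that(1), of "n - m"] T[OF that(2), of "m - n"]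
    by (cases "m \<le> n") (simp_all add: abs_minus_commute)
  then show "\<exists>M. \<forall>m\<ge>M. \<forall>n\<ge>M. norm (x m - x n) < e" using \<open>0 < e\<close> by force
qed

lemma sums_of_uniform_setwise_limit:
  fixes \<mu> :: "nat \<Rightarrow> 'a::topological_space measure"
  assumes \<mu>: "\<And>s. \<mu> s \<in> space (prob_algebra borel)"
    and lim: "\<And>A. A \<in> sets borel \<Longrightarrow> (\<lambda>s. measure (\<mu> s) A) \<longlonglongrightarrow> f A"
    and unif: "\<And>\<epsilon>. 0 < \<epsilon> \<Longrightarrow> \<exists>T. \<forall>A\<in>sets borel. \<bar>measure (\<mu> T) A - f A\<bar> \<le> \<epsilon>"
    and A: "range A \<subseteq> sets borel" "disjoint_family A"
  shows "(\<lambda>i. f (A i)) sums f (\<Union>i. A i)"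
proof -
  define U where "U N = (\<Union>i<N. A i)" for N
  have U: "U N \<in> sets borel" for N unfolding U_def using A(1) by auto
  have UN_A: "(\<Union>i. A i) \<in> sets borel" using A(1) by auto
  have partial: "(\<Sum>i<N. f (A i)) = f (U N)" for N
  proof (rule LIMSEQ_unique)
    show "(\<lambda>s. \<Sum>i<N. measure (\<mu> s) (A i)) \<longlonglongrightarrow> (\<Sum>i<N. f (A i))"
      using A(1) by (intro tendsto_sum lim) auto
    have finite_add: "measure (\<mu> s) (U N) = (\<Sum>i<N. measure (\<mu> s) (A i))" for s
    proof -
      interpret prob_space "\<mu> s" using \<mu> by (simp add: space_prob_algebra)
      show ?thesis unfolding U_def using A \<mu>[of s]
        by (intro measure_finite_Union) (auto simp: space_prob_algebra disjoint_family_on_def)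
    qed
    show "(\<lambda>s. \<Sum>i<N. measure (\<mu> s) (A i)) \<longlonglongrightarrow> f (U N)"
      using lim[OF U[of N]] unfolding finite_add .
  qed
  show ?thesis unfolding sums_def partial
  proof (rule LIMSEQ_I)
    fix r :: real assume "0 < r"
    then obtain T where T: "\<And>A. A \<in> sets borel \<Longrightarrow> \<bar>measure (\<mu> T) A - f A\<bar> \<le> r / 4"
      using unif[of "r / 4"] by auto
    interpret prob_space "\<mu> T" using \<mu> by (simp add: space_prob_algebra)
    have "(\<lambda>N. measure (\<mu> T) (U N)) \<longlonglongrightarrow> measure (\<mu> T) (\<Union>N. U N)"
    proof (rule finite_Lim_measure_incseq)
      show "range U \<subseteq> events" using U \<mu>[of T] by (auto simp: space_prob_algebra)
      show "incseq U" unfolding incseq_def U_def by (force simp: subset_eq)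
    qed
    moreover have "(\<Union>N. U N) = (\<Union>i. A i)" unfolding U_def by blast
    ultimately obtain N0 where N0: "\<And>N. N \<ge> N0 \<Longrightarrow> \<bar>measure (\<mu> T) (U N) - measure (\<mu> T) (\<Union>i. A i)\<bar> < r / 4"
      using \<open>0 < r\<close> by (metis LIMSEQ_D divide_pos_pos real_norm_def zero_less_numeral)
    have "\<bar>f (U N) - f (\<Union>i. A i)\<bar> < r" if "N \<ge> N0" for N
      using N0[OF that] T[OF U[of N]] T[OF UN_A] \<open>0 < r\<close> by linarith
    then show "\<exists>N0. \<forall>N\<ge>N0. norm (f (U N) - f (\<Union>i. A i)) < r" by auto
  qed
qed

lemma setwise_limit_of_uniformly_Cauchy:
  fixes \<mu> :: "nat \<Rightarrow> 'a::topological_space measure"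
  assumes \<mu>: "\<And>t. \<mu> t \<in> space (prob_algebra borel)"
    and Cauchy: "\<And>\<epsilon>. 0 < \<epsilon> \<Longrightarrow>
      \<exists>T. \<forall>t\<ge>T. \<forall>s. \<forall>A\<in>sets borel. \<bar>measure (\<mu> t) A - measure (\<mu> (t + s)) A\<bar> \<le> \<epsilon>"
  obtains m where "m \<in> space (prob_algebra borel)"
    "\<And>A. A \<in> sets borel \<Longrightarrow> (\<lambda>s. measure (\<mu> s) A) \<longlonglongrightarrow> measure m A"
proof -
  define f where "f A = lim (\<lambda>s. measure (\<mu> s) A)" for A
  have lim: "(\<lambda>s. measure (\<mu> s) A) \<longlonglongrightarrow> f A" if A: "A \<in> sets borel" for A
  proof -
    have "convergent (\<lambda>s. measure (\<mu> s) A)"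
      by (rule convergent_of_uniform_tail_bound) (use Cauchy A in blast)
    then show ?thesis unfolding f_def by (simp add: convergent_LIMSEQ_iff)
  qed
  have unif: "\<exists>T. \<forall>A\<in>sets borel. \<bar>measure (\<mu> T) A - f A\<bar> \<le> \<epsilon>" if \<epsilon>: "0 < \<epsilon>" for \<epsilon>
  proof -
    obtain T where T: "\<And>s A. A \<in> sets borel \<Longrightarrow> \<bar>measure (\<mu> T) A - measure (\<mu> (T + s)) A\<bar> \<le> \<epsilon>"
      using Cauchy[OF \<epsilon>] by blast
    have "\<bar>measure (\<mu> T) A - f A\<bar> \<le> \<epsilon>" if A: "A \<in> sets borel" for A
    proof (rule LIMSEQ_le_const2)
      show "(\<lambda>s. \<bar>measure (\<mu> T) A - measure (\<mu> (s + T)) A\<bar>) \<longlonglongrightarrow> \<bar>measure (\<mu> T) A - f A\<bar>"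
        by (intro tendsto_intros LIMSEQ_ignore_initial_segment lim A)
    qed (use T[OF A] in \<open>simp add: add.commute\<close>)
    then show ?thesis by blast
  qed
  have f_nonneg: "0 \<le> f A" if A: "A \<in> sets borel" for A
    by (rule LIMSEQ_le_const[OF lim[OF A]]) simp
  have f_UNIV: "f UNIV = 1"
  proof -
    have "measure (\<mu> s) UNIV = 1" for s
      using \<mu>[of s] prob_space.prob_space[of "\<mu> s"] sets_eq_imp_space_eq[of "\<mu> s" borel]
      by (simp add: space_prob_algebra)
    then show ?thesis using LIMSEQ_unique[OF lim[of UNIV]] by simp
  qed
  have sigma: "sigma_algebra UNIV (sets (borel :: 'a measure))"
    using sets.sigma_algebra_axioms[of borel] by simp
  have "f {} = 0" using lim[of "{}"] by (simp add: LIMSEQ_const_iff)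
  then have positive: "positive (sets borel) (\<lambda>A. ennreal (f A))" by (simp add: positive_def)
  have countably_additive: "countably_additive (sets borel) (\<lambda>A. ennreal (f A))"
    unfolding countably_additive_def
  proof (intro allI impI)
    fix A :: "nat \<Rightarrow> 'a set" assume A: "range A \<subseteq> sets borel" "disjoint_family A"
    have "\<And>i. 0 \<le> f (A i)" "0 \<le> f (\<Union>i. A i)" using A(1) by (auto intro!: f_nonneg)
    then have "(\<lambda>i. ennreal (f (A i))) sums ennreal (f (\<Union>i. A i))"
      using sums_of_uniform_setwise_limit[OF \<mu> lim unif A] by (simp add: sums_ennreal)
    then show "(\<Sum>i. ennreal (f (A i))) = ennreal (f (\<Union>i. A i))" by (simp add: sums_iff)
  qed
  define m where "m = measure_of UNIV (sets borel) (\<lambda>A. ennreal (f A))"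
  have emeasure_m: "emeasure m A = ennreal (f A)" if A: "A \<in> sets borel" for A
    unfolding m_def by (rule emeasure_measure_of_sigma[OF sigma positive countably_additive A])
  have sets_m: "sets m = sets borel" "space m = UNIV"
    unfolding m_def using sigma_algebra.sets_measure_of_eq[OF sigma] sigma_algebra.space_measure_of_eq[OF sigma]
    by simp_all
  have "prob_space m" by (rule prob_spaceI) (simp add: emeasure_m sets_m f_UNIV)
  then have "m \<in> space (prob_algebra borel)" using sets_m by (simp add: space_prob_algebra)
  moreover have "measure m A = f A" if A: "A \<in> sets borel" for A
    using emeasure_m[OF A] f_nonneg[OF A] by (simp add: measure_def)
  ultimately show ?thesis using that lim by metis
qed

lemma tv_norm_limit_of_Cauchy:
  fixes \<mu> :: "nat \<Rightarrow> 'a::topological_space measure"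
  assumes \<mu>: "\<And>t. \<mu> t \<in> space (prob_algebra borel)"
    and Cauchy: "\<And>\<epsilon>. 0 < \<epsilon> \<Longrightarrow> \<exists>T. \<forall>t\<ge>T. \<forall>s. tv_norm (\<mu> t) (\<mu> (t + s)) \<le> \<epsilon>"
  obtains m where "m \<in> space (prob_algebra borel)" "(\<lambda>t. tv_norm (\<mu> t) m) \<longlonglongrightarrow> 0"
    "\<And>t b. (\<And>s. tv_norm (\<mu> t) (\<mu> (t + s)) \<le> b) \<Longrightarrow> tv_norm (\<mu> t) m \<le> b"
proof -
  have setwise_Cauchy:
    "\<exists>T. \<forall>t\<ge>T. \<forall>s. \<forall>A\<in>sets borel. \<bar>measure (\<mu> t) A - measure (\<mu> (t + s)) A\<bar> \<le> \<epsilon>"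
    if \<epsilon>: "0 < \<epsilon>" for \<epsilon>
  proof -
    obtain T where "\<And>t s. t \<ge> T \<Longrightarrow> tv_norm (\<mu> t) (\<mu> (t + s)) \<le> \<epsilon>" using Cauchy[OF \<epsilon>] by blast
    then show ?thesis by (blast intro: order_trans[OF abs_measure_diff_le_tv_norm[OF \<mu> \<mu>]])
  qed
  obtain m where m: "m \<in> space (prob_algebra borel)"
    and setwise: "\<And>A. A \<in> sets borel \<Longrightarrow> (\<lambda>s. measure (\<mu> s) A) \<longlonglongrightarrow> measure m A"
    using setwise_limit_of_uniformly_Cauchy[of \<mu>, OF \<mu> setwise_Cauchy] by blast
  have limit_bound: "tv_norm (\<mu> t) m \<le> b" if bound: "\<And>s. tv_norm (\<mu> t) (\<mu> (t + s)) \<le> b" for t b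
  proof (rule tv_norm_leI)
    show "sets (\<mu> t) = sets borel" using \<mu> by (simp add: space_prob_algebra)
    fix \<phi> :: "'a \<Rightarrow> real" assume \<phi>: "\<phi> \<in> borel_measurable borel" "\<And>x. \<bar>\<phi> x\<bar> \<le> 1"
    show "\<bar>integral\<^sup>L (\<mu> t) \<phi> - integral\<^sup>L m \<phi>\<bar> \<le> b"
    proof (rule LIMSEQ_le_const2)
      show "(\<lambda>s. \<bar>integral\<^sup>L (\<mu> t) \<phi> - integral\<^sup>L (\<mu> (s + t)) \<phi>\<bar>) \<longlonglongrightarrow> \<bar>integral\<^sup>L (\<mu> t) \<phi> - integral\<^sup>L m \<phi>\<bar>"
        by (intro tendsto_intros LIMSEQ_ignore_initial_segment
            tendsto_integral_of_tendsto_measure[OF \<mu> m setwise \<phi>])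
      show "\<exists>N. \<forall>s\<ge>N. \<bar>integral\<^sup>L (\<mu> t) \<phi> - integral\<^sup>L (\<mu> (s + t)) \<phi>\<bar> \<le> b"
        using abs_integral_diff_le_tv_norm[OF \<mu> \<mu> \<phi>] bound order_trans by (metis add.commute)
    qed
  qed
  have "(\<lambda>t. tv_norm (\<mu> t) m) \<longlonglongrightarrow> 0"
  proof (rule LIMSEQ_I)
    fix r :: real assume "0 < r"
    then obtain T where "\<And>t s. t \<ge> T \<Longrightarrow> tv_norm (\<mu> t) (\<mu> (t + s)) \<le> r / 2"
      using Cauchy[of "r / 2"] by auto
    then show "\<exists>T. \<forall>t\<ge>T. norm (tv_norm (\<mu> t) m - 0) < r"
      using limit_bound tv_norm_nonneg[OF \<mu> m] \<open>0 < r\<close> by (fastforce intro!: exI[of _ T])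
  qed
  then show ?thesis using that m limit_bound by blast
qed

lemma exists_geometric_plus_tail_less:
  fixes g :: "real \<Rightarrow> real" and \<alpha> :: "nat \<Rightarrow> real"
  assumes \<alpha>: "\<And>n. 0 < \<alpha> n \<and> \<alpha> n \<le> 1" and g: "filterlim g at_top at_top"
    and "0 \<le> S" and "0 < \<epsilon>"
  shows "\<exists>n T. 0 < g (real n) \<and> (\<forall>t\<ge>T. 2 * (1 - \<alpha> n) ^ t + 4 * (S / g (real n)) < \<epsilon>)"
proof -
  obtain N where N: "\<And>x. x \<ge> N \<Longrightarrow> 8 * S / \<epsilon> + 1 \<le> g x"
    using g unfolding filterlim_at_top eventually_at_top_linorder by blast
  define n where "n = nat \<lceil>N\<rceil>"
  have n: "8 * S / \<epsilon> + 1 \<le> g (real n)" by (rule N) (simp add: n_def; linarith)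
  have "0 \<le> 8 * S / \<epsilon>" using \<open>0 \<le> S\<close> \<open>0 < \<epsilon>\<close> by simp
  then have gn: "0 < g (real n)" using n by linarith
  have "4 * (S / g (real n)) \<le> 4 * (S / (8 * S / \<epsilon> + 1))"
    using n \<open>0 \<le> S\<close> \<open>0 \<le> 8 * S / \<epsilon>\<close> by (intro mult_left_mono divide_left_mono) auto
  also have "\<dots> < \<epsilon> / 2" using \<open>0 \<le> S\<close> \<open>0 < \<epsilon>\<close> by (simp add: field_simps)
  finally have tail: "4 * (S / g (real n)) < \<epsilon> / 2" .
  have "(\<lambda>t. (1 - \<alpha> n) ^ t) \<longlonglongrightarrow> 0" using \<alpha>[of n] by (intro LIMSEQ_power_zero) auto
  then obtain T where "\<And>t. t \<ge> T \<Longrightarrow> \<bar>(1 - \<alpha> n) ^ t\<bar> < \<epsilon> / 4"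
    using \<open>0 < \<epsilon>\<close> by (metis LIMSEQ_D diff_zero divide_pos_pos real_norm_def zero_less_numeral)
  then have "\<forall>t\<ge>T. 2 * (1 - \<alpha> n) ^ t + 4 * (S / g (real n)) < \<epsilon>" using tail by force
  then show ?thesis using gn by blast
qed

theorem mainTheorem2:
  fixes Q :: "'a::euclidean_space \<Rightarrow> 'a measure"
    and \<alpha> :: "nat \<Rightarrow> real" and \<nu> :: "nat \<Rightarrow> 'a measure"
    and g :: "real \<Rightarrow> real"
    and M :: "'b measure" and X :: "nat \<Rightarrow> 'b \<Rightarrow> 'a"
  assumes kernel: "prob_kernel Q"
    and alpha_range: "\<And>n. 0 < \<alpha> n \<and> \<alpha> n \<le> 1"
    and alpha_mono: "decseq \<alpha>"
    and nu_prob: "\<And>n. \<nu> n \<in> space (prob_algebra borel)"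
    and minor: "\<And>n x A. norm x \<le> real n \<Longrightarrow> A \<in> sets borel \<Longrightarrow>
                  measure (Q x) A \<ge> \<alpha> n * measure (\<nu> n) A"
    and g_nonneg: "\<And>u. 0 \<le> u \<Longrightarrow> 0 \<le> g u"
    and g_mono: "mono_on {0..} g"
    and g_lim: "filterlim g at_top at_top"
    and chain: "markov_chain M Q X"
    and moment: "(SUP k. \<integral>\<^sup>+ \<omega>. ennreal (g (norm (X k \<omega>))) \<partial>M) < \<infinity>"
  shows "\<exists>\<mu>. \<mu> \<in> space (prob_algebra borel) \<and>
           (\<lambda>t. tv_norm (distr M borel (X t)) \<mu>) \<longlonglongrightarrow> 0 \<and>
           (\<forall>n t. g (real n) > 0 \<longrightarrow>
              tv_norm (distr M borel (X t)) \<mu>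
                \<le> 4 * enn2real (SUP k. \<integral>\<^sup>+ \<omega>. ennreal (g (norm (X k \<omega>))) \<partial>M) / g (real n)
                  + 2 * (1 - \<alpha> n) ^ t)"
proof -
  define S where "S = enn2real (SUP k. \<integral>\<^sup>+ \<omega>. ennreal (g (norm (X k \<omega>))) \<partial>M)"
  define \<mu> where "\<mu> t = distr M borel (X t)" for t
  have K: "Q \<in> borel \<rightarrow>\<^sub>M prob_algebra borel" using kernel unfolding prob_kernel_def .
  have \<mu>: "\<mu> t \<in> space (prob_algebra borel)" for t
    unfolding \<mu>_def by (rule markov_chain_distr_in_prob_algebra[OF chain])
  have S: "0 \<le> S" "(\<integral>\<^sup>+ \<omega>. ennreal (g (norm (X t \<omega>))) \<partial>M) \<le> ennreal S" for t
    using moment by (auto simp: S_def less_top[symmetric] intro: SUP_upper)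
  have bound: "tv_norm (\<mu> t) (\<mu> (t + s)) \<le> 2 * (1 - \<alpha> n) ^ t + 4 * (S / g (real n))"
    if "0 < g (real n)" for n t s
    unfolding \<mu>_def using alpha_range[of n] that S
    by (intro markov_chain_tv_norm_shift_le[OF K chain _ _ nu_prob minor g_mono]) auto
  have "\<exists>T. \<forall>t\<ge>T. \<forall>s. tv_norm (\<mu> t) (\<mu> (t + s)) \<le> \<epsilon>" if "0 < \<epsilon>" for \<epsilon>
    using exists_geometric_plus_tail_less[OF alpha_range g_lim S(1) that] bound
    by (meson less_imp_le order_trans)
  then obtain m where "m \<in> space (prob_algebra borel)" "(\<lambda>t. tv_norm (\<mu> t) m) \<longlonglongrightarrow> 0"
    and limit_bound: "\<And>t b. (\<And>s. tv_norm (\<mu> t) (\<mu> (t + s)) \<le> b) \<Longrightarrow> tv_norm (\<mu> t) m \<le> b"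
    using tv_norm_limit_of_Cauchy[of \<mu>, OF \<mu>] by blast
  moreover have "tv_norm (\<mu> t) m \<le> 4 * S / g (real n) + 2 * (1 - \<alpha> n) ^ t" if "0 < g (real n)" for n t
    using limit_bound[OF bound[OF that], of t] by (simp add: add.commute)
  ultimately show ?thesis unfolding \<mu>_def S_def by blast
qed

end
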